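(* Fix $k\ge1$ and let $P(z)=P^{(k)}(q,t,u;z)=\sum_{n\ge0}\sum_{\pi\in\mathcal{Q}^k_n}q^{\operatorname{asc}(\pi)}t^{\operatorname{des}(\pi)}u^{\operatorname{plat}(\pi)}\frac{z^n}{n!}$. Then $P$ satisfies the differential equation $$P'(z)=(P(z)-1+q)(P(z)-1+t)(P(z)-1+u)^{k-1}$$ (derivative with respect to $z$), with initial condition $P(0)=1$.
   Context: $\mathcal{Q}^k_n$ ($k$-Stirling permutations) is the set of permutations $\pi$ of the multiset $\{1^k,\dots,n^k\}$ (each of $1,\dots,n$ appearing $k$ times) avoiding the pattern $212$, i.e. there are no indices $i<j<\ell$ with $\pi_i=\pi_\ell>\pi_j$; $\mathcal{Q}^k_0$ consists of the empty sequence. For a sequence $\pi_1\cdots\pi_r$: $i\in\{1,\dots,r\}$ is a descent if $\pi_i>\pi_{i+1}$ or $i=r$; $i\in\{0,\dots,r-1\}$ is an ascent if $i=0$ or $\pi_i<\pi_{i+1}$; $i\in\{1,\dots,r-1\}$ is a plateau if $\pi_i=\pi_{i+1}$; $\operatorname{des},\operatorname{asc},\operatorname{plat}$ count these. *)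

theory Defs
  imports "HOL-Library.Multiset" "HOL-Computational_Algebra.Formal_Power_Series"
begin

(* sequences are lists; positions are 1-based as in the paper: pos1 xs i = pi_i *)
definition pos1 :: "nat list \<Rightarrow> nat \<Rightarrow> nat" where
  "pos1 xs i = xs ! (i - 1)"

definition avoids212 :: "nat list \<Rightarrow> bool" where
  "avoids212 xs \<longleftrightarrow> \<not> (\<exists>i j l. 1 \<le> i \<and> i < j \<and> j < l \<and> l \<le> length xs \<and>
       pos1 xs i = pos1 xs l \<and> pos1 xs i > pos1 xs j)"

definition stirling_perms :: "nat \<Rightarrow> nat \<Rightarrow> nat list set" where
  "stirling_perms k n = {xs. mset xs = (\<Sum>i\<in>{1..n}. replicate_mset k i) \<and> avoids212 xs}"

definition des :: "nat list \<Rightarrow> nat" where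
  "des xs = card {i\<in>{1..length xs}. pos1 xs i > pos1 xs (i + 1) \<or> i = length xs}"

definition asc :: "nat list \<Rightarrow> nat" where
  "asc xs = card {i\<in>{0..<length xs}. i = 0 \<or> pos1 xs i < pos1 xs (i + 1)}"

definition plat :: "nat list \<Rightarrow> nat" where
  "plat xs = card {i\<in>{1..<length xs}. pos1 xs i = pos1 xs (i + 1)}"

(* exponential generating function P^(k)(q,t,u;z), coefficients evaluated at q,t,u *)
definition stirling_egf :: "nat \<Rightarrow> 'a::field_char_0 \<Rightarrow> 'a \<Rightarrow> 'a \<Rightarrow> 'a fps" where
  "stirling_egf k q t u = Abs_fps (\<lambda>n.
     (\<Sum>xs\<in>stirling_perms k n. q ^ asc xs * t ^ des xs * u ^ plat xs) / fact n)"

end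

theory Submission
  imports Defs
begin

(*
  Frame a word by the letter 0: its ascents, descents and plateaux become the rising, falling and
  level steps of 0 xs 0, weighted q, t and u. The k copies of the least letter m of a Stirling word
  cut it into k + 1 blocks; these are Stirling words on the parts of an ordered partition (with
  empty parts allowed) of the other letters, and every such tuple of blocks glues back to a Stirling
  word. All letters of a block exceed m, so a nonempty block carries its own framed weight, while an
  empty one contributes only the step between its neighbours: 0 m, m m or m 0, of weight q, u or t.
  By induction on the alphabet, the total weight depends only on the number n + 1 of letters, and
  summing over ordered partitions multiplies exponential generating functions: the total weight is
  n! [z^n] (P - 1 + q) (P - 1 + u)^(k-1) (P - 1 + t), while it is also n! [z^n] P'.
*)

unbundle fps_syntax

section \<open>Avoiding the pattern 212\<close>

lemma avoids212_altdef:
  "avoids212 xs \<longleftrightarrow>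
     (\<forall>i j l. i < j \<longrightarrow> j < l \<longrightarrow> l < length xs \<longrightarrow> xs ! i = xs ! l \<longrightarrow> xs ! i \<le> xs ! j)"
proof -
  have "(\<exists>i j l. 1 \<le> i \<and> i < j \<and> j < l \<and> l \<le> length xs \<and>
           xs ! (i - 1) = xs ! (l - 1) \<and> xs ! (j - 1) < xs ! (i - 1)) \<longleftrightarrow>
        (\<exists>i j l. i < j \<and> j < l \<and> l < length xs \<and> xs ! i = xs ! l \<and> \<not> xs ! i \<le> xs ! j)"
  proof
    assume "\<exists>i j l. 1 \<le> i \<and> i < j \<and> j < l \<and> l \<le> length xs \<and>
              xs ! (i - 1) = xs ! (l - 1) \<and> xs ! (j - 1) < xs ! (i - 1)"
    then obtain i j l where "1 \<le> i" "i < j" "j < l" "l \<le> length xs"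
        "xs ! (i - 1) = xs ! (l - 1)" "xs ! (j - 1) < xs ! (i - 1)"
      by blast
    then show "\<exists>i j l. i < j \<and> j < l \<and> l < length xs \<and> xs ! i = xs ! l \<and> \<not> xs ! i \<le> xs ! j"
      by (intro exI[of _ "i - 1"] exI[of _ "j - 1"] exI[of _ "l - 1"]) auto
  next
    assume "\<exists>i j l. i < j \<and> j < l \<and> l < length xs \<and> xs ! i = xs ! l \<and> \<not> xs ! i \<le> xs ! j"
    then obtain i j l where "i < j" "j < l" "l < length xs" "xs ! i = xs ! l" "\<not> xs ! i \<le> xs ! j"
      by blast
    then show "\<exists>i j l. 1 \<le> i \<and> i < j \<and> j < l \<and> l \<le> length xs \<and>
                 xs ! (i - 1) = xs ! (l - 1) \<and> xs ! (j - 1) < xs ! (i - 1)"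
      by (intro exI[of _ "Suc i"] exI[of _ "Suc j"] exI[of _ "Suc l"]) auto
  qed
  then show ?thesis
    unfolding avoids212_def pos1_def by blast
qed

lemma avoids212_appendD1:
  assumes "avoids212 (xs @ ys)"
  shows "avoids212 xs"
  unfolding avoids212_altdef
proof (intro allI impI)
  fix i j l
  assume "i < j" "j < l" "l < length xs" "xs ! i = xs ! l"
  then show "xs ! i \<le> xs ! j"
    using assms[unfolded avoids212_altdef, rule_format, of i j l] by (simp add: nth_append)
qed

lemma avoids212_appendD2:
  assumes "avoids212 (xs @ ys)"
  shows "avoids212 ys"
  unfolding avoids212_altdef
proof (intro allI impI)
  fix i j l
  assume "i < j" "j < l" "l < length ys" "ys ! i = ys ! l"
  then show "ys ! i \<le> ys ! j"
    using assms[unfolded avoids212_altdef, rule_format,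
        of "length xs + i" "length xs + j" "length xs + l"]
    by (simp add: nth_append)
qed

lemma avoids212_append:
  assumes "avoids212 xs" "avoids212 ys" "set xs \<inter> set ys = {}"
  shows "avoids212 (xs @ ys)"
  unfolding avoids212_altdef
proof (intro allI impI)
  fix i j l
  assume ijl: "i < j" "j < l" "l < length (xs @ ys)" and eq: "(xs @ ys) ! i = (xs @ ys) ! l"
  consider "l < length xs" | "length xs \<le> i" | "i < length xs" "length xs \<le> l"
    by linarith
  then show "(xs @ ys) ! i \<le> (xs @ ys) ! j"
  proof cases
    case 1
    then show ?thesis
      using assms(1) ijl eq unfolding avoids212_altdef by (simp add: nth_append)
  next
    case 2
    then show ?thesis
      using assms(2)[unfolded avoids212_altdef, rule_format,
          of "i - length xs" "j - length xs" "l - length xs"] ijl eq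
      by (simp add: nth_append)
  next
    case 3
    then have "xs ! i \<in> set xs" "ys ! (l - length xs) \<in> set ys"
      using ijl by auto
    with 3 eq assms(3) show ?thesis
      by (auto simp: nth_append)
  qed
qed

lemma avoids212_Cons_min:
  assumes "avoids212 ys" "\<forall>y\<in>set ys. m \<le> y"
  shows "avoids212 (m # ys)"
  unfolding avoids212_altdef
proof (intro allI impI)
  fix i j l
  assume ijl: "i < j" "j < l" "l < length (m # ys)" "(m # ys) ! i = (m # ys) ! l"
  show "(m # ys) ! i \<le> (m # ys) ! j"
  proof (cases i)
    case 0
    then show ?thesis
      using ijl assms(2) by (cases j) auto
  next
    case (Suc i')
    then show ?thesis
      using ijl assms(1) unfolding avoids212_altdef
      by (cases j; cases l) auto
  qed
qed

lemma avoids212_enclosed_le: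
  assumes "avoids212 (s @ m # r)" "b \<in> set s" "b \<in> set r"
  shows "b \<le> m"
proof -
  obtain i where i: "i < length s" "s ! i = b"
    using assms(2) by (auto simp: in_set_conv_nth)
  obtain l where l: "l < length r" "r ! l = b"
    using assms(3) by (auto simp: in_set_conv_nth)
  show ?thesis
    using assms(1)[unfolded avoids212_altdef, rule_format, of i "length s" "Suc (length s + l)"] i l
    by (simp add: nth_append)
qed

section \<open>Cutting a word at the occurrences of a letter\<close>

fun cut_at :: "'a \<Rightarrow> 'a list \<Rightarrow> 'a list list" where
  "cut_at m [] = [[]]"
| "cut_at m (x # xs) = (if x = m then [] # cut_at m xs else
     (case cut_at m xs of [] \<Rightarrow> [[x]] | y # ys \<Rightarrow> (x # y) # ys))"

fun join_at :: "'a \<Rightarrow> 'a list list \<Rightarrow> 'a list" where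
  "join_at m [] = []"
| "join_at m [xs] = xs"
| "join_at m (xs # ys # zss) = xs @ m # join_at m (ys # zss)"

lemma cut_at_not_Nil: "cut_at m xs \<noteq> []"
  by (induction xs) (auto split: list.split)

lemma join_at_Cons_Cons: "join_at m ((x # xs) # yss) = x # join_at m (xs # yss)"
  by (cases yss) auto

lemma join_at_Cons: "yss \<noteq> [] \<Longrightarrow> join_at m (xs # yss) = xs @ m # join_at m yss"
  by (cases yss) auto

lemma cut_at_append:
  "m \<notin> set xs \<Longrightarrow> cut_at m (xs @ ys) = (case cut_at m ys of zs # zss \<Rightarrow> (xs @ zs) # zss)"
  by (induction xs) (use cut_at_not_Nil[of m ys] in \<open>auto split: list.split\<close>)

lemma cut_at_append_Cons: "m \<notin> set xs \<Longrightarrow> cut_at m (xs @ m # ys) = xs # cut_at m ys"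
  using cut_at_append[of m xs "m # ys"] by simp

lemma cut_at_notin: "m \<notin> set xs \<Longrightarrow> cut_at m xs = [xs]"
  using cut_at_append[of m xs "[]"] by simp

lemma join_cut_at: "join_at m (cut_at m xs) = xs"
proof (induction xs)
  case (Cons x xs)
  then show ?case
    using cut_at_not_Nil[of m xs]
    by (cases "cut_at m xs") (auto simp: join_at_Cons_Cons join_at_Cons)
qed simp

lemma cut_join_at: "xss \<noteq> [] \<Longrightarrow> \<forall>xs\<in>set xss. m \<notin> set xs \<Longrightarrow> cut_at m (join_at m xss) = xss"
  by (induction m xss rule: join_at.induct) (auto simp: cut_at_notin cut_at_append_Cons)

lemma length_cut_at: "length (cut_at m xs) = Suc (count (mset xs) m)"
  by (induction xs) (use cut_at_not_Nil in \<open>auto split: list.split\<close>)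

section \<open>Ordered set partitions and products of exponential generating functions\<close>

fun weak_ordered_partition :: "'a set \<Rightarrow> 'a set list \<Rightarrow> bool" where
  "weak_ordered_partition T [] \<longleftrightarrow> T = {}"
| "weak_ordered_partition T (A # As) \<longleftrightarrow> A \<subseteq> T \<and> weak_ordered_partition (T - A) As"

lemma weak_ordered_partition_Union: "weak_ordered_partition T As \<Longrightarrow> \<Union>(set As) = T"
  by (induction As arbitrary: T) auto

lemma weak_ordered_partition_subset: "weak_ordered_partition T As \<Longrightarrow> A \<in> set As \<Longrightarrow> A \<subseteq> T"
  using weak_ordered_partition_Union by blast

lemma finite_weak_ordered_partitions:
  assumes "finite T"
  shows "finite {As. weak_ordered_partition T As \<and> length As = n}"
proof (rule finite_subset)
  show "{As. weak_ordered_partition T As \<and> length As = n} \<subseteq> {As. set As \<subseteq> Pow T \<and> length As = n}"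
    using weak_ordered_partition_subset by blast
  show "finite {As. set As \<subseteq> Pow T \<and> length As = n}"
    using assms by (intro finite_lists_length_eq) auto
qed

lemma weak_ordered_partitions_Suc:
  "{As. weak_ordered_partition T As \<and> length As = Suc n} =
     (\<lambda>(A, As). A # As) ` (SIGMA A:Pow T. {As. weak_ordered_partition (T - A) As \<and> length As = n})"
  by (auto simp: image_iff length_Suc_conv)

lemma sum_Pow_card:
  fixes g :: "nat \<Rightarrow> 'a::comm_semiring_1"
  assumes "finite T"
  shows "(\<Sum>A\<in>Pow T. g (card A)) = (\<Sum>j\<le>card T. of_nat (card T choose j) * g j)"
proof -
  have "card ` Pow T \<subseteq> {..card T}"
    using assms by (auto intro: card_mono)
  then have "(\<Sum>A\<in>Pow T. g (card A)) = (\<Sum>j\<le>card T. \<Sum>A\<in>{A \<in> Pow T. card A = j}. g (card A))"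
    using assms by (intro sum.group[symmetric]) auto
  also have "\<dots> = (\<Sum>j\<le>card T. of_nat (card T choose j) * g j)"
  proof (rule sum.cong)
    fix j
    have "(\<Sum>A\<in>{A \<in> Pow T. card A = j}. g (card A)) = of_nat (card {A. A \<subseteq> T \<and> card A = j}) * g j"
      by simp
    then show "(\<Sum>A\<in>{A \<in> Pow T. card A = j}. g (card A)) = of_nat (card T choose j) * g j"
      using n_subsets[OF assms] by simp
  qed simp
  finally show ?thesis .
qed

definition egf :: "(nat \<Rightarrow> 'a::field_char_0) \<Rightarrow> 'a fps" where
  "egf f = Abs_fps (\<lambda>j. f j / fact j)"

lemma sum_weak_ordered_partitions_egf:
  fixes fs :: "(nat \<Rightarrow> 'a::field_char_0) list" and T :: "'b set"
  assumes "finite T"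
  shows "(\<Sum>As | weak_ordered_partition T As \<and> length As = length fs.
            prod_list (map2 (\<lambda>f A. f (card A)) fs As))
         = fact (card T) * prod_list (map egf fs) $ card T"
  using assms
proof (induction fs arbitrary: T)
  case Nil
  then have "{As. weak_ordered_partition T As \<and> length As = 0} = (if T = {} then {[]} else {})"
    by auto
  then show ?case
    using Nil.prems by simp
next
  case (Cons f fs)
  define N where "N = card T"
  define C where "C = prod_list (map egf fs)"
  have inj: "inj_on (\<lambda>(A, As). A # As) X" for X :: "('b set \<times> 'b set list) set"
    by (auto simp: inj_on_def)
  have "(\<Sum>As | weak_ordered_partition T As \<and> length As = length (f # fs).
                prod_list (map2 (\<lambda>f A. f (card A)) (f # fs) As))
      = (\<Sum>(A, As)\<in>(SIGMA A:Pow T. {As. weak_ordered_partition (T - A) As \<and> length As = length fs}).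
          f (card A) * prod_list (map2 (\<lambda>f A. f (card A)) fs As))"
    by (simp only: length_Cons weak_ordered_partitions_Suc sum.reindex[OF inj]) (simp add: case_prod_beta)
  also have "\<dots> = (\<Sum>A\<in>Pow T. f (card A) *
      (\<Sum>As | weak_ordered_partition (T - A) As \<and> length As = length fs.
          prod_list (map2 (\<lambda>f A. f (card A)) fs As)))"
    using Cons.prems
    by (subst sum.Sigma[symmetric]) (auto intro: finite_weak_ordered_partitions simp: sum_distrib_left)
  also have "\<dots> = (\<Sum>A\<in>Pow T. f (card A) * (fact (N - card A) * C $ (N - card A)))"
  proof (rule sum.cong)
    fix A assume "A \<in> Pow T"
    then have "card (T - A) = N - card A"
      using Cons.prems unfolding N_def by (simp add: card_Diff_subset finite_subset)
    then show "f (card A) * (\<Sum>As | weak_ordered_partition (T - A) As \<and> length As = length fs.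
          prod_list (map2 (\<lambda>f A. f (card A)) fs As)) = f (card A) * (fact (N - card A) * C $ (N - card A))"
      using Cons.IH[of "T - A"] Cons.prems by (simp add: C_def)
  qed simp
  also have "\<dots> = (\<Sum>j\<le>N. of_nat (N choose j) * (f j * (fact (N - j) * C $ (N - j))))"
    unfolding N_def by (rule sum_Pow_card[OF Cons.prems])
  also have "\<dots> = (\<Sum>j\<le>N. fact N * (f j / fact j * C $ (N - j)))"
    by (intro sum.cong) (auto simp: binomial_fact field_simps)
  also have "\<dots> = fact N * (egf f * C) $ N"
    by (simp add: fps_mult_nth egf_def sum_distrib_left atLeast0AtMost)
  finally show ?case
    by (simp add: N_def C_def)
qed

section \<open>Stirling words over an arbitrary alphabet\<close>

definition stirling_words :: "nat \<Rightarrow> nat set \<Rightarrow> nat list set" where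
  "stirling_words k S = {xs. mset xs = (\<Sum>i\<in>S. replicate_mset k i) \<and> avoids212 xs}"

lemma stirling_perms_eq_stirling_words: "stirling_perms k n = stirling_words k {1..n}"
  by (simp add: stirling_perms_def stirling_words_def)

lemma count_sum_replicate_mset:
  "finite T \<Longrightarrow> count (\<Sum>i\<in>T. replicate_mset k i) b = (if b \<in> T then k else 0)"
  by (simp add: count_sum if_distrib[of "\<lambda>c. c = b"] sum.delta')

lemma finite_stirling_words: "finite (stirling_words k S)"
proof -
  obtain xs where "mset xs = (\<Sum>i\<in>S. replicate_mset k i)"
    using ex_mset by blast
  then have "stirling_words k S \<subseteq> {ys. mset ys = mset xs}"
    by (auto simp: stirling_words_def)
  then show ?thesis
    using mset_eq_finite finite_subset by blast
qed

lemma stirling_words_empty: "stirling_words k {} = {[]}"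
  by (auto simp: stirling_words_def avoids212_altdef)

lemma set_stirling_word_subset: "finite S \<Longrightarrow> xs \<in> stirling_words k S \<Longrightarrow> set xs \<subseteq> S"
  by (auto simp: stirling_words_def set_mset_sum dest!: arg_cong[of _ _ set_mset])

lemma set_stirling_word:
  assumes "0 < k" "finite S" "xs \<in> stirling_words k S"
  shows "set xs = S"
proof -
  have "set_mset (mset xs) = S"
    using assms by (auto simp: stirling_words_def set_mset_sum)
  then show ?thesis
    by simp
qed

lemma stirling_wordI:
  assumes "avoids212 xs" "\<forall>b\<in>set xs. count (mset xs) b = k"
  shows "xs \<in> stirling_words k (set xs)"
  using assms by (auto simp: stirling_words_def multiset_eq_iff count_sum_replicate_mset
      count_eq_zero_iff)

lemma cut_at_min_letter:
  assumes "avoids212 xs" "\<forall>y\<in>set xs. m \<le> y" "\<forall>b\<in>set xs - {m}. count (mset xs) b = k"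
  shows "weak_ordered_partition (set xs - {m}) (map set (cut_at m xs))
     \<and> (\<forall>\<sigma>\<in>set (cut_at m xs). \<sigma> \<in> stirling_words k (set \<sigma>))"
  using assms
proof (induction "length xs" arbitrary: xs rule: less_induct)
  case less
  show ?case
  proof (cases "m \<in> set xs")
    case False
    then show ?thesis
      using less.prems stirling_wordI[of xs k] by (simp add: cut_at_notin)
  next
    case True
    then obtain s r where xs: "xs = s @ m # r" and "m \<notin> set s"
      using split_list_first by metis
    have "set s \<inter> set r = {}"
    proof (intro equals0I)
      fix b assume "b \<in> set s \<inter> set r"
      moreover from this have "b \<le> m"
        using avoids212_enclosed_le less.prems(1) xs by blast
      moreover have "m \<le> b"
        using less.prems(2) xs calculation by auto
      ultimately show False
        using \<open>m \<notin> set s\<close> by auto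
    qed
    then have count_s: "count (mset xs) b = count (mset s) b" if "b \<in> set s" for b
      using that xs \<open>m \<notin> set s\<close> by (auto simp: count_eq_zero_iff)
    have count_r: "count (mset xs) b = count (mset r) b" if "b \<in> set r - {m}" for b
      using that xs \<open>set s \<inter> set r = {}\<close> by (auto simp: count_eq_zero_iff)
    have "avoids212 s" "avoids212 r"
      using less.prems(1) xs avoids212_appendD1 avoids212_appendD2[of "s @ [m]" r] by auto
    have "\<forall>b\<in>set s. count (mset s) b = k"
    proof
      fix b assume "b \<in> set s"
      moreover from this have "b \<in> set xs - {m}"
        using xs \<open>m \<notin> set s\<close> by auto
      ultimately show "count (mset s) b = k"
        using less.prems(3) count_s by force
    qed
    then have "s \<in> stirling_words k (set s)"
      using \<open>avoids212 s\<close> by (intro stirling_wordI)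
    moreover have "weak_ordered_partition (set r - {m}) (map set (cut_at m r))
      \<and> (\<forall>\<sigma>\<in>set (cut_at m r). \<sigma> \<in> stirling_words k (set \<sigma>))"
      using less.prems count_r xs \<open>avoids212 r\<close> by (intro less.hyps) auto
    moreover have "set xs - {m} - set s = set r - {m}"
      using xs \<open>set s \<inter> set r = {}\<close> by auto
    ultimately show ?thesis
      using xs \<open>m \<notin> set s\<close> by (auto simp: cut_at_append_Cons)
  qed
qed

definition stirling_tuples :: "nat \<Rightarrow> nat set list \<Rightarrow> nat list list set" where
  "stirling_tuples k Ts = {\<sigma>s. list_all2 (\<lambda>\<sigma> T. \<sigma> \<in> stirling_words k T) \<sigma>s Ts}"

lemma join_at_stirling_tuple:
  assumes "\<sigma>s \<in> stirling_tuples k Ts" "weak_ordered_partition U Ts"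
    and "Ts \<noteq> []" "finite U" "\<forall>y\<in>U. m < y"
  shows "avoids212 (join_at m \<sigma>s) \<and>
    mset (join_at m \<sigma>s) = (\<Sum>i\<in>U. replicate_mset k i) + replicate_mset (length Ts - 1) m"
  using assms
proof (induction \<sigma>s arbitrary: Ts U)
  case (Cons \<sigma> \<sigma>s)
  obtain T Ts' where Ts: "Ts = T # Ts'" and \<sigma>: "\<sigma> \<in> stirling_words k T"
    and tail: "\<sigma>s \<in> stirling_tuples k Ts'"
    using Cons.prems(1) by (cases Ts) (auto simp: stirling_tuples_def)
  have "T \<subseteq> U" and partition: "weak_ordered_partition (U - T) Ts'"
    using Cons.prems(2) Ts by auto
  then have "finite T"
    using Cons.prems(4) finite_subset by blast
  show ?case
  proof (cases "\<sigma>s = []")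
    case True
    then have "Ts' = []" "U = T"
      using tail partition \<open>T \<subseteq> U\<close> by (auto simp: stirling_tuples_def)
    then show ?thesis
      using True Ts \<sigma> by (simp add: stirling_words_def)
  next
    case False
    then have "Ts' \<noteq> []"
      using tail by (cases Ts') (auto simp: stirling_tuples_def)
    define R where "R = join_at m \<sigma>s"
    have IH: "avoids212 R \<and>
        mset R = (\<Sum>i\<in>U - T. replicate_mset k i) + replicate_mset (length Ts' - 1) m"
      unfolding R_def using Cons.prems \<open>Ts' \<noteq> []\<close> by (intro Cons.IH[OF tail partition]) auto
    then have "set R \<subseteq> (U - T) \<union> {m}"
      using Cons.prems(4) by (auto dest!: arg_cong[of _ _ set_mset] simp: set_mset_sum split: if_splits)
    then have "avoids212 (m # R)"
      using IH Cons.prems(5) by (intro avoids212_Cons_min) force+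
    moreover have "set \<sigma> \<inter> set (m # R) = {}"
      using set_stirling_word_subset[OF \<open>finite T\<close> \<sigma>] \<open>set R \<subseteq> (U - T) \<union> {m}\<close>
        \<open>T \<subseteq> U\<close> Cons.prems(5) by auto
    ultimately have "avoids212 (\<sigma> @ m # R)"
      using \<sigma> by (intro avoids212_append) (auto simp: stirling_words_def)
    moreover have "(\<Sum>i\<in>U. replicate_mset k i) =
        (\<Sum>i\<in>U - T. replicate_mset k i) + (\<Sum>i\<in>T. replicate_mset k i)"
      using \<open>T \<subseteq> U\<close> Cons.prems(4) by (rule sum.subset_diff)
    moreover have "length Ts - 1 = Suc (length Ts' - 1)"
      using Ts \<open>Ts' \<noteq> []\<close> by simp
    ultimately show ?thesis
      using IH \<sigma> False unfolding R_def by (simp add: join_at_Cons stirling_words_def)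
  qed
qed (simp add: stirling_tuples_def)

lemma stirling_tuples_Cons:
  "stirling_tuples k (T # Ts) = (\<lambda>(\<sigma>, \<sigma>s). \<sigma> # \<sigma>s) ` (stirling_words k T \<times> stirling_tuples k Ts)"
  by (auto simp: stirling_tuples_def list_all2_Cons2 image_iff)

lemma length_stirling_tuple: "\<sigma>s \<in> stirling_tuples k Ts \<Longrightarrow> length \<sigma>s = length Ts"
  by (simp add: stirling_tuples_def list_all2_lengthD)

lemma finite_stirling_tuples: "finite (stirling_tuples k Ts)"
  by (induction Ts) (auto simp: stirling_tuples_Cons finite_stirling_words, simp add: stirling_tuples_def)

lemma map_set_stirling_tuple:
  assumes "0 < k" "finite U" "weak_ordered_partition U Ts" "\<sigma>s \<in> stirling_tuples k Ts"
  shows "map set \<sigma>s = Ts"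
proof (rule nth_equalityI)
  have "length \<sigma>s = length Ts" "\<forall>i<length Ts. \<sigma>s ! i \<in> stirling_words k (Ts ! i)"
    using assms(4) by (auto simp: stirling_tuples_def list_all2_conv_all_nth)
  moreover have "\<forall>T\<in>set Ts. finite T"
    using assms(2,3) weak_ordered_partition_subset by (meson finite_subset)
  ultimately show "length (map set \<sigma>s) = length Ts"
    "\<And>i. i < length (map set \<sigma>s) \<Longrightarrow> map set \<sigma>s ! i = Ts ! i"
    using assms(1) set_stirling_word by (auto simp del: set_map)
qed

lemma cut_at_min_stirling_word:
  assumes "0 < k" "finite S" "m \<in> S" "\<forall>y\<in>S. m \<le> y" "xs \<in> stirling_words k S"
  shows "weak_ordered_partition (S - {m}) (map set (cut_at m xs)) \<and> length (cut_at m xs) = Suc k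
    \<and> cut_at m xs \<in> stirling_tuples k (map set (cut_at m xs))"
proof -
  have "set xs = S"
    using assms(1,2,5) by (rule set_stirling_word)
  have counts: "count (mset xs) b = (if b \<in> S then k else 0)" for b
    using assms(2,5) by (simp add: stirling_words_def count_sum_replicate_mset)
  have "avoids212 xs"
    using assms(5) by (simp add: stirling_words_def)
  then have "weak_ordered_partition (S - {m}) (map set (cut_at m xs))
      \<and> (\<forall>\<sigma>\<in>set (cut_at m xs). \<sigma> \<in> stirling_words k (set \<sigma>))"
    using cut_at_min_letter[of xs m k] \<open>set xs = S\<close> counts assms(4) by auto
  moreover have "length (cut_at m xs) = Suc k"
    using counts[of m] assms(3) by (simp add: length_cut_at)
  ultimately show ?thesis
    by (simp add: stirling_tuples_def list_all2_map2 list_all2_same)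
qed

lemma join_at_min_stirling_tuple:
  assumes "finite S" "m \<in> S" "\<forall>y\<in>S. m \<le> y"
    and "weak_ordered_partition (S - {m}) Ts" "length Ts = Suc k" "\<sigma>s \<in> stirling_tuples k Ts"
  shows "join_at m \<sigma>s \<in> stirling_words k S"
proof -
  have "avoids212 (join_at m \<sigma>s) \<and>
      mset (join_at m \<sigma>s) = (\<Sum>i\<in>S - {m}. replicate_mset k i) + replicate_mset k m"
    using join_at_stirling_tuple[of \<sigma>s k Ts "S - {m}" m] assms by force
  moreover have "(\<Sum>i\<in>S. replicate_mset k i) = replicate_mset k m + (\<Sum>i\<in>S - {m}. replicate_mset k i)"
    using assms(1,2) by (rule sum.remove)
  ultimately show ?thesis
    by (simp add: stirling_words_def add.commute)
qed

lemma image_cut_at_stirling_words: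
  assumes "0 < k" "finite S" "m \<in> S" "\<forall>y\<in>S. m \<le> y"
  shows "cut_at m ` stirling_words k S =
    (\<Union>Ts\<in>{Ts. weak_ordered_partition (S - {m}) Ts \<and> length Ts = Suc k}. stirling_tuples k Ts)"
proof (intro equalityI subsetI)
  fix \<sigma>s assume "\<sigma>s \<in> cut_at m ` stirling_words k S"
  then obtain xs where xs: "xs \<in> stirling_words k S" "\<sigma>s = cut_at m xs"
    by blast
  show "\<sigma>s \<in> (\<Union>Ts\<in>{Ts. weak_ordered_partition (S - {m}) Ts \<and> length Ts = Suc k}. stirling_tuples k Ts)"
    using cut_at_min_stirling_word[OF assms xs(1)] xs(2) by (intro UN_I[of "map set \<sigma>s"]) simp_all
next
  fix \<sigma>s assume "\<sigma>s \<in> (\<Union>Ts\<in>{Ts. weak_ordered_partition (S - {m}) Ts \<and> length Ts = Suc k}. stirling_tuples k Ts)"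
  then obtain Ts where Ts: "weak_ordered_partition (S - {m}) Ts" "length Ts = Suc k"
    "\<sigma>s \<in> stirling_tuples k Ts"
    by blast
  then have "join_at m \<sigma>s \<in> stirling_words k S"
    using assms(2-4) by (intro join_at_min_stirling_tuple)
  moreover have "cut_at m (join_at m \<sigma>s) = \<sigma>s"
  proof (rule cut_join_at)
    show "\<sigma>s \<noteq> []"
      using length_stirling_tuple[OF Ts(3)] Ts(2) by auto
    have "map set \<sigma>s = Ts"
      using assms(1,2) Ts(1,3) by (intro map_set_stirling_tuple) auto
    then show "\<forall>\<sigma>\<in>set \<sigma>s. m \<notin> set \<sigma>"
      using Ts(1) weak_ordered_partition_subset by fastforce
  qed
  ultimately show "\<sigma>s \<in> cut_at m ` stirling_words k S"
    by (metis image_eqI)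
qed

lemma sum_stirling_words_cut_at_min:
  assumes "0 < k" "finite S" "m \<in> S" "\<forall>y\<in>S. m \<le> y"
  shows "(\<Sum>xs\<in>stirling_words k S. g xs) =
    (\<Sum>Ts | weak_ordered_partition (S - {m}) Ts \<and> length Ts = Suc k.
       \<Sum>\<sigma>s\<in>stirling_tuples k Ts. g (join_at m \<sigma>s))"
proof -
  define P where "P = {Ts. weak_ordered_partition (S - {m}) Ts \<and> length Ts = Suc k}"
  have "inj_on (cut_at m) (stirling_words k S)"
    by (metis inj_onI join_cut_at)
  then have "(\<Sum>xs\<in>stirling_words k S. g xs) = (\<Sum>\<sigma>s\<in>cut_at m ` stirling_words k S. g (join_at m \<sigma>s))"
    by (simp add: sum.reindex join_cut_at)
  also have "\<dots> = (\<Sum>\<sigma>s\<in>(\<Union>Ts\<in>P. stirling_tuples k Ts). g (join_at m \<sigma>s))"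
    unfolding P_def image_cut_at_stirling_words[OF assms] ..
  also have "\<dots> = (\<Sum>Ts\<in>P. \<Sum>\<sigma>s\<in>stirling_tuples k Ts. g (join_at m \<sigma>s))"
  proof (rule sum.UNION_disjoint)
    show "finite P"
      unfolding P_def using assms(2) by (simp add: finite_weak_ordered_partitions)
    have "map set \<sigma>s = Ts" if "Ts \<in> P" "\<sigma>s \<in> stirling_tuples k Ts" for Ts \<sigma>s
      using assms(1,2) that map_set_stirling_tuple[of k "S - {m}"] by (auto simp: P_def)
    then show "\<forall>Ts\<in>P. \<forall>Ts'\<in>P. Ts \<noteq> Ts' \<longrightarrow> stirling_tuples k Ts \<inter> stirling_tuples k Ts' = {}"
      by blast
  qed (simp add: finite_stirling_tuples)
  finally show ?thesis
    unfolding P_def .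
qed

section \<open>Ascents, descents and plateaux of a framed word\<close>

lemma nth_framed:
  "i \<le> Suc (length xs) \<Longrightarrow>
     (0 # xs @ [0]) ! i = (if i = 0 \<or> i = Suc (length xs) then 0 else pos1 xs i)"
  by (cases i) (auto simp: nth_append pos1_def)

lemma pos1_pos: "\<forall>y\<in>set xs. 0 < y \<Longrightarrow> 1 \<le> i \<Longrightarrow> i \<le> length xs \<Longrightarrow> 0 < pos1 xs i"
  by (simp add: pos1_def)

lemma asc_eq_card_framed:
  assumes "\<forall>y\<in>set xs. 0 < y"
  shows "asc xs = card {i\<in>{..<Suc (length xs)}. (0 # xs @ [0]) ! i < (0 # xs @ [0]) ! Suc i}"
  unfolding asc_def
proof (intro arg_cong[of _ _ card] set_eqI iffI)
  fix i assume "i \<in> {i\<in>{0..<length xs}. i = 0 \<or> pos1 xs i < pos1 xs (i + 1)}"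
  then show "i \<in> {i\<in>{..<Suc (length xs)}. (0 # xs @ [0]) ! i < (0 # xs @ [0]) ! Suc i}"
    using nth_framed[of i xs] nth_framed[of "Suc i" xs] pos1_pos[OF assms, of 1] by auto
next
  fix i assume "i \<in> {i\<in>{..<Suc (length xs)}. (0 # xs @ [0]) ! i < (0 # xs @ [0]) ! Suc i}"
  then show "i \<in> {i\<in>{0..<length xs}. i = 0 \<or> pos1 xs i < pos1 xs (i + 1)}"
    using nth_framed[of i xs] nth_framed[of "Suc i" xs] by (auto split: if_splits)
qed

lemma des_eq_card_framed:
  assumes "\<forall>y\<in>set xs. 0 < y"
  shows "des xs = card {i\<in>{..<Suc (length xs)}. (0 # xs @ [0]) ! Suc i < (0 # xs @ [0]) ! i}"
  unfolding des_def
proof (intro arg_cong[of _ _ card] set_eqI iffI)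
  fix i assume "i \<in> {i\<in>{1..length xs}. pos1 xs (i + 1) < pos1 xs i \<or> i = length xs}"
  then show "i \<in> {i\<in>{..<Suc (length xs)}. (0 # xs @ [0]) ! Suc i < (0 # xs @ [0]) ! i}"
    using nth_framed[of i xs] nth_framed[of "Suc i" xs] pos1_pos[OF assms, of i] by auto
next
  fix i assume "i \<in> {i\<in>{..<Suc (length xs)}. (0 # xs @ [0]) ! Suc i < (0 # xs @ [0]) ! i}"
  then show "i \<in> {i\<in>{1..length xs}. pos1 xs (i + 1) < pos1 xs i \<or> i = length xs}"
    using nth_framed[of i xs] nth_framed[of "Suc i" xs] by (auto split: if_splits)
qed

lemma plat_eq_card_framed:
  assumes "\<forall>y\<in>set xs. 0 < y" "xs \<noteq> []"
  shows "plat xs = card {i\<in>{..<Suc (length xs)}. (0 # xs @ [0]) ! i = (0 # xs @ [0]) ! Suc i}"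
proof -
  define ys where "ys = 0 # xs @ [0]"
  have ys: "ys ! i = (if i = 0 \<or> i = Suc (length xs) then 0 else pos1 xs i)"
    if "i \<le> Suc (length xs)" for i
    unfolding ys_def using that by (rule nth_framed)
  have "{i\<in>{1..<length xs}. pos1 xs i = pos1 xs (i + 1)} = {i\<in>{..<Suc (length xs)}. ys ! i = ys ! Suc i}"
  proof (intro set_eqI iffI)
    fix i assume "i \<in> {i\<in>{1..<length xs}. pos1 xs i = pos1 xs (i + 1)}"
    then show "i \<in> {i\<in>{..<Suc (length xs)}. ys ! i = ys ! Suc i}"
      using ys[of i] ys[of "Suc i"] by auto
  next
    fix i assume i: "i \<in> {i\<in>{..<Suc (length xs)}. ys ! i = ys ! Suc i}"
    obtain r where "length xs = Suc r"
      using assms(2) by (cases xs) auto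
    then have "i \<noteq> 0" "i \<noteq> length xs"
      using i ys[of i] ys[of "Suc i"] pos1_pos[OF assms(1), of i]
        pos1_pos[OF assms(1), of "Suc i"] by (auto split: if_splits)
    then show "i \<in> {i\<in>{1..<length xs}. pos1 xs i = pos1 xs (i + 1)}"
      using i ys[of i] ys[of "Suc i"] by auto
  qed
  then show ?thesis
    by (simp add: plat_def ys_def)
qed

section \<open>Weights of Stirling words\<close>

locale stirling_weights =
  fixes k :: nat and q t u :: "'a::field_char_0"
  assumes k_pos: "0 < k"
begin

definition step_wt :: "nat \<Rightarrow> nat \<Rightarrow> 'a" where
  "step_wt a b = (if a < b then q else if b < a then t else u)"

fun walk_wt :: "nat list \<Rightarrow> 'a" where
  "walk_wt (a # b # xs) = step_wt a b * walk_wt (b # xs)"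
| "walk_wt _ = 1"

lemma walk_wt_append_Cons: "walk_wt (xs @ c # ys) = walk_wt (xs @ [c]) * walk_wt (c # ys)"
  by (induction xs rule: walk_wt.induct) (auto simp: mult.assoc)

lemma walk_wt_snoc: "xs \<noteq> [] \<Longrightarrow> walk_wt (xs @ [b]) = walk_wt xs * step_wt (last xs) b"
  by (induction xs rule: walk_wt.induct) (auto simp: mult.assoc)

lemma walk_wt_conv_prod: "walk_wt ys = (\<Prod>i<length ys - 1. step_wt (ys ! i) (ys ! Suc i))"
  by (induction ys rule: walk_wt.induct) (auto simp: prod.lessThan_Suc_shift simp del: prod.lessThan_Suc)

lemma walk_wt_eq_powers:
  "walk_wt ys = q ^ card {i\<in>{..<length ys - 1}. ys ! i < ys ! Suc i}
     * t ^ card {i\<in>{..<length ys - 1}. ys ! Suc i < ys ! i}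
     * u ^ card {i\<in>{..<length ys - 1}. ys ! i = ys ! Suc i}"
proof -
  have "walk_wt ys = (\<Prod>i<length ys - 1. (if ys ! i < ys ! Suc i then q else 1)
      * (if ys ! Suc i < ys ! i then t else 1) * (if ys ! i = ys ! Suc i then u else 1))"
    unfolding walk_wt_conv_prod by (rule prod.cong) (auto simp: step_wt_def)
  then show ?thesis
    by (simp add: prod.distrib prod.If_cases Int_def conj_commute)
qed

text \<open>Framing a word by the letter 0 accounts for the conventions that position 0 is an ascent and
  the last position a descent.\<close>

lemma stat_wt_eq_walk_wt:
  assumes "xs \<noteq> []" "\<forall>y\<in>set xs. 0 < y"
  shows "q ^ asc xs * t ^ des xs * u ^ plat xs = walk_wt (0 # xs @ [0])"
proof -
  have "length (0 # xs @ [0]) - 1 = Suc (length xs)"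
    by simp
  then show ?thesis
    unfolding walk_wt_eq_powers[of "0 # xs @ [0]"] asc_eq_card_framed[OF assms(2)]
      des_eq_card_framed[OF assms(2)] plat_eq_card_framed[OF assms(2,1)]
    by (simp only:)
qed

lemma walk_wt_reframe:
  assumes "\<sigma> \<noteq> []" "\<forall>y\<in>set \<sigma>. a < y \<and> b < y"
  shows "walk_wt (a # \<sigma> @ [b]) = walk_wt (0 # \<sigma> @ [0])"
proof -
  obtain x \<sigma>' where \<sigma>: "\<sigma> = x # \<sigma>'"
    using assms(1) by (cases \<sigma>) auto
  have "a < x" "0 < x" "b < last \<sigma>" "0 < last \<sigma>"
    using assms \<sigma> last_in_set by fastforce+
  then show ?thesis
    using walk_wt_snoc[of \<sigma> b] walk_wt_snoc[of \<sigma> 0] \<sigma> by (simp add: step_wt_def)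
qed

definition wt_sum :: "nat set \<Rightarrow> 'a" where
  "wt_sum S = (\<Sum>xs\<in>stirling_words k S. q ^ asc xs * t ^ des xs * u ^ plat xs)"

definition block_wt :: "'a \<Rightarrow> nat set \<Rightarrow> 'a" where
  "block_wt c T = (if T = {} then c else wt_sum T)"

lemma sum_stirling_words_framed:
  assumes "finite T" "\<forall>y\<in>T. a < y \<and> b < y"
  shows "(\<Sum>\<sigma>\<in>stirling_words k T. walk_wt (a # \<sigma> @ [b])) = block_wt (step_wt a b) T"
proof (cases "T = {}")
  case True
  then show ?thesis
    by (simp add: stirling_words_empty block_wt_def)
next
  case False
  have "walk_wt (a # \<sigma> @ [b]) = q ^ asc \<sigma> * t ^ des \<sigma> * u ^ plat \<sigma>"
    if "\<sigma> \<in> stirling_words k T" for \<sigma>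
  proof -
    have "set \<sigma> = T"
      using k_pos assms(1) that by (rule set_stirling_word)
    then have "\<sigma> \<noteq> []" "\<forall>y\<in>set \<sigma>. a < y \<and> b < y" "\<forall>y\<in>set \<sigma>. 0 < y"
      using False assms(2) by auto
    then show ?thesis
      using walk_wt_reframe stat_wt_eq_walk_wt by metis
  qed
  then have "(\<Sum>\<sigma>\<in>stirling_words k T. walk_wt (a # \<sigma> @ [b])) = wt_sum T"
    unfolding wt_sum_def by (rule sum.cong[OF refl])
  then show ?thesis
    using False by (simp add: block_wt_def)
qed

lemma sum_stirling_tuples_single:
  "(\<Sum>\<sigma>s\<in>stirling_tuples k [T]. walk_wt (a # join_at m \<sigma>s @ [b]))
     = (\<Sum>\<sigma>\<in>stirling_words k T. walk_wt (a # \<sigma> @ [b]))"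
proof -
  have "stirling_tuples k [T] = (\<lambda>\<sigma>. [\<sigma>]) ` stirling_words k T"
    by (auto simp: stirling_tuples_def list_all2_Cons2 image_iff)
  then show ?thesis
    by (simp add: sum.reindex inj_on_def)
qed

lemma sum_stirling_tuples_Cons:
  assumes "Ts \<noteq> []"
  shows "(\<Sum>\<sigma>s\<in>stirling_tuples k (T # Ts). walk_wt (a # join_at m \<sigma>s @ [b]))
    = (\<Sum>\<sigma>\<in>stirling_words k T. walk_wt (a # \<sigma> @ [m]))
      * (\<Sum>\<sigma>s\<in>stirling_tuples k Ts. walk_wt (m # join_at m \<sigma>s @ [b]))"
proof -
  have inj: "inj_on (\<lambda>(\<sigma>, \<sigma>s). \<sigma> # \<sigma>s) X" for X :: "(nat list \<times> nat list list) set"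
    by (auto simp: inj_on_def)
  have split: "walk_wt (a # join_at m (\<sigma> # \<sigma>s) @ [b]) = walk_wt (a # \<sigma> @ [m]) * walk_wt (m # join_at m \<sigma>s @ [b])"
    if "\<sigma>s \<in> stirling_tuples k Ts" for \<sigma> \<sigma>s
  proof -
    have "\<sigma>s \<noteq> []"
      using that length_stirling_tuple assms by fastforce
    then have "a # join_at m (\<sigma> # \<sigma>s) @ [b] = (a # \<sigma>) @ m # (join_at m \<sigma>s @ [b])"
      by (simp add: join_at_Cons)
    then show ?thesis
      using walk_wt_append_Cons[of "a # \<sigma>" m "join_at m \<sigma>s @ [b]"] by simp
  qed
  have "(\<Sum>\<sigma>s\<in>stirling_tuples k (T # Ts). walk_wt (a # join_at m \<sigma>s @ [b])) =
      (\<Sum>(\<sigma>, \<sigma>s)\<in>stirling_words k T \<times> stirling_tuples k Ts. walk_wt (a # join_at m (\<sigma> # \<sigma>s) @ [b]))"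
    by (simp only: stirling_tuples_Cons sum.reindex[OF inj]) (simp add: case_prod_beta)
  also have "\<dots> = (\<Sum>(\<sigma>, \<sigma>s)\<in>stirling_words k T \<times> stirling_tuples k Ts.
      walk_wt (a # \<sigma> @ [m]) * walk_wt (m # join_at m \<sigma>s @ [b]))"
    by (rule sum.cong[OF refl]) (auto simp: split)
  also have "\<dots> = (\<Sum>\<sigma>\<in>stirling_words k T. \<Sum>\<sigma>s\<in>stirling_tuples k Ts.
      walk_wt (a # \<sigma> @ [m]) * walk_wt (m # join_at m \<sigma>s @ [b]))"
    by (rule sum.cartesian_product[symmetric])
  finally show ?thesis
    by (simp add: sum_product)
qed

lemma sum_stirling_tuples_after_min:
  assumes "\<forall>T\<in>set Ts. finite T \<and> (\<forall>y\<in>T. m < y)" "length Ts = Suc j" "0 < m"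
  shows "(\<Sum>\<sigma>s\<in>stirling_tuples k Ts. walk_wt (m # join_at m \<sigma>s @ [0]))
    = prod_list (map2 block_wt (replicate j u @ [t]) Ts)"
  using assms(1,2)
proof (induction j arbitrary: Ts)
  case 0
  then obtain T where "Ts = [T]" "finite T" "\<forall>y\<in>T. m < y \<and> 0 < y"
    using assms(3) by (cases Ts) force+
  moreover have "step_wt m 0 = t"
    using assms(3) by (simp add: step_wt_def)
  ultimately show ?case
    by (simp add: sum_stirling_tuples_single sum_stirling_words_framed)
next
  case (Suc j)
  then obtain T Ts' where Ts: "Ts = T # Ts'" and "length Ts' = Suc j"
    by (auto simp: length_Suc_conv)
  then have "Ts' \<noteq> []"
    by auto
  then have "(\<Sum>\<sigma>s\<in>stirling_tuples k Ts. walk_wt (m # join_at m \<sigma>s @ [0]))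
      = (\<Sum>\<sigma>\<in>stirling_words k T. walk_wt (m # \<sigma> @ [m]))
        * (\<Sum>\<sigma>s\<in>stirling_tuples k Ts'. walk_wt (m # join_at m \<sigma>s @ [0]))"
    unfolding Ts by (rule sum_stirling_tuples_Cons)
  also have "(\<Sum>\<sigma>\<in>stirling_words k T. walk_wt (m # \<sigma> @ [m])) = block_wt (step_wt m m) T"
    using Suc.prems(1) Ts by (intro sum_stirling_words_framed) auto
  also have "step_wt m m = u"
    by (simp add: step_wt_def)
  also have "(\<Sum>\<sigma>s\<in>stirling_tuples k Ts'. walk_wt (m # join_at m \<sigma>s @ [0]))
      = prod_list (map2 block_wt (replicate j u @ [t]) Ts')"
    using Suc.prems(1) Ts \<open>length Ts' = Suc j\<close> by (intro Suc.IH) auto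
  finally show ?case
    by (simp add: Ts)
qed

text \<open>The weights of the steps \<open>0 m\<close>, \<open>m m\<close>, \<dots>, \<open>m m\<close>, \<open>m 0\<close> across the \<open>k\<close> copies of the
  minimal letter \<open>m\<close> in a framed word, when all blocks between them are empty.\<close>

definition boundary_wts :: "'a list" where
  "boundary_wts = q # replicate (k - 1) u @ [t]"

lemma sum_stirling_tuples_framed:
  assumes "\<forall>T\<in>set Ts. finite T \<and> (\<forall>y\<in>T. m < y)" "length Ts = Suc k" "0 < m"
  shows "(\<Sum>\<sigma>s\<in>stirling_tuples k Ts. walk_wt (0 # join_at m \<sigma>s @ [0]))
    = prod_list (map2 block_wt boundary_wts Ts)"
proof -
  obtain T Ts' where Ts: "Ts = T # Ts'" and "length Ts' = Suc (k - 1)"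
    using assms(2) k_pos by (cases Ts) auto
  then have "Ts' \<noteq> []"
    by auto
  then have "(\<Sum>\<sigma>s\<in>stirling_tuples k Ts. walk_wt (0 # join_at m \<sigma>s @ [0]))
      = (\<Sum>\<sigma>\<in>stirling_words k T. walk_wt (0 # \<sigma> @ [m]))
        * (\<Sum>\<sigma>s\<in>stirling_tuples k Ts'. walk_wt (m # join_at m \<sigma>s @ [0]))"
    unfolding Ts by (rule sum_stirling_tuples_Cons)
  also have "(\<Sum>\<sigma>\<in>stirling_words k T. walk_wt (0 # \<sigma> @ [m])) = block_wt (step_wt 0 m) T"
    using assms(1,3) Ts by (intro sum_stirling_words_framed) auto
  also have "step_wt 0 m = q"
    using assms(3) by (simp add: step_wt_def)
  also have "(\<Sum>\<sigma>s\<in>stirling_tuples k Ts'. walk_wt (m # join_at m \<sigma>s @ [0]))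
      = prod_list (map2 block_wt (replicate (k - 1) u @ [t]) Ts')"
    using assms(1,3) Ts \<open>length Ts' = Suc (k - 1)\<close> by (intro sum_stirling_tuples_after_min) auto
  finally show ?thesis
    by (simp add: Ts boundary_wts_def)
qed

lemma wt_sum_recursion:
  assumes "finite S" "S \<noteq> {}" "0 \<notin> S"
  shows "wt_sum S = (\<Sum>Ts | weak_ordered_partition (S - {Min S}) Ts \<and> length Ts = Suc k.
    prod_list (map2 block_wt boundary_wts Ts))"
proof -
  define m where "m = Min S"
  have "m \<in> S" "\<forall>y\<in>S. m \<le> y"
    using assms(1,2) by (simp_all add: m_def)
  have "0 < m"
    using \<open>m \<in> S\<close> assms(3) by (cases m) auto
  have "wt_sum S = (\<Sum>xs\<in>stirling_words k S. walk_wt (0 # xs @ [0]))"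
    unfolding wt_sum_def
  proof (rule sum.cong[OF refl])
    fix xs assume "xs \<in> stirling_words k S"
    then have "set xs = S"
      using k_pos assms(1) by (intro set_stirling_word)
    then have "xs \<noteq> []" "\<forall>y\<in>set xs. 0 < y"
      using assms(2,3) by (auto intro!: gr0I)
    then show "q ^ asc xs * t ^ des xs * u ^ plat xs = walk_wt (0 # xs @ [0])"
      by (rule stat_wt_eq_walk_wt)
  qed
  also have "\<dots> = (\<Sum>Ts | weak_ordered_partition (S - {m}) Ts \<and> length Ts = Suc k.
      \<Sum>\<sigma>s\<in>stirling_tuples k Ts. walk_wt (0 # join_at m \<sigma>s @ [0]))"
    using k_pos assms(1) \<open>m \<in> S\<close> \<open>\<forall>y\<in>S. m \<le> y\<close> by (rule sum_stirling_words_cut_at_min)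
  also have "\<dots> = (\<Sum>Ts | weak_ordered_partition (S - {m}) Ts \<and> length Ts = Suc k.
      prod_list (map2 block_wt boundary_wts Ts))"
  proof (rule sum.cong[OF refl])
    fix Ts assume Ts: "Ts \<in> {Ts. weak_ordered_partition (S - {m}) Ts \<and> length Ts = Suc k}"
    have "\<forall>T\<in>set Ts. finite T \<and> (\<forall>y\<in>T. m < y)"
    proof
      fix T assume "T \<in> set Ts"
      then have "T \<subseteq> S - {m}"
        using Ts weak_ordered_partition_subset by blast
      then show "finite T \<and> (\<forall>y\<in>T. m < y)"
        using assms(1) \<open>\<forall>y\<in>S. m \<le> y\<close> finite_subset by fastforce
    qed
    then show "(\<Sum>\<sigma>s\<in>stirling_tuples k Ts. walk_wt (0 # join_at m \<sigma>s @ [0]))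
        = prod_list (map2 block_wt boundary_wts Ts)"
      using Ts \<open>0 < m\<close> by (intro sum_stirling_tuples_framed) auto
  qed
  finally show ?thesis
    unfolding m_def .
qed

definition wt_seq :: "nat \<Rightarrow> 'a" where
  "wt_seq n = wt_sum {1..n}"

definition block_wt_seq :: "'a \<Rightarrow> nat \<Rightarrow> 'a" where
  "block_wt_seq c j = (if j = 0 then c else wt_seq j)"

lemma wt_sum_eq_egf_coeff:
  assumes "finite S" "S \<noteq> {}" "0 \<notin> S"
    and smaller: "\<And>T. finite T \<Longrightarrow> 0 \<notin> T \<Longrightarrow> card T < card S \<Longrightarrow> wt_sum T = wt_seq (card T)"
  shows "wt_sum S = fact (card S - 1) * prod_list (map (egf \<circ> block_wt_seq) boundary_wts) $ (card S - 1)"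
proof -
  define m where "m = Min S"
  have "m \<in> S"
    using assms(1,2) by (simp add: m_def)
  have "map2 block_wt boundary_wts Ts = map2 (\<lambda>f A. f (card A)) (map block_wt_seq boundary_wts) Ts"
    if "weak_ordered_partition (S - {m}) Ts" for Ts
  proof -
    have "block_wt c T = block_wt_seq c (card T)" if "T \<in> set Ts" for c T
    proof -
      have "T \<subseteq> S - {m}"
        using weak_ordered_partition_subset \<open>T \<in> set Ts\<close> \<open>weak_ordered_partition (S - {m}) Ts\<close>
        by blast
      then have "finite T" "0 \<notin> T" "card T < card S"
        using assms(1,3) \<open>m \<in> S\<close> finite_subset psubset_card_mono by blast+
      then show ?thesis
        using smaller by (simp add: block_wt_def block_wt_seq_def)
    qed
    then have "map2 block_wt boundary_wts Ts = map2 (\<lambda>c A. block_wt_seq c (card A)) boundary_wts Ts"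
      by (intro map_cong refl) (auto dest: set_zip_rightD)
    then show ?thesis
      by (simp add: zip_map1 comp_def case_prod_beta)
  qed
  then have "wt_sum S = (\<Sum>Ts | weak_ordered_partition (S - {m}) Ts \<and> length Ts = length boundary_wts.
      prod_list (map2 (\<lambda>f A. f (card A)) (map block_wt_seq boundary_wts) Ts))"
    using wt_sum_recursion[OF assms(1-3)] k_pos by (simp add: m_def boundary_wts_def)
  also have "\<dots> = fact (card (S - {m})) * prod_list (map (egf \<circ> block_wt_seq) boundary_wts) $ card (S - {m})"
    using sum_weak_ordered_partitions_egf[of "S - {m}" "map block_wt_seq boundary_wts"] assms(1)
    by simp
  finally show ?thesis
    using assms(1) \<open>m \<in> S\<close> by simp
qed

lemma wt_sum_eq_wt_seq_card: "finite S \<Longrightarrow> 0 \<notin> S \<Longrightarrow> wt_sum S = wt_seq (card S)"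
proof (induction "card S" arbitrary: S rule: less_induct)
  case less
  show ?case
  proof (cases "S = {}")
    case True
    then show ?thesis
      by (simp add: wt_seq_def)
  next
    case False
    then have "{1..card S} \<noteq> {}"
      using less.prems(1) by (auto simp: card_gt_0_iff Suc_le_eq)
    have "wt_sum S = fact (card S - 1) * prod_list (map (egf \<circ> block_wt_seq) boundary_wts) $ (card S - 1)"
      using False less by (intro wt_sum_eq_egf_coeff) auto
    moreover have "wt_sum {1..card S} = fact (card {1..card S} - 1)
        * prod_list (map (egf \<circ> block_wt_seq) boundary_wts) $ (card {1..card S} - 1)"
      using \<open>{1..card S} \<noteq> {}\<close> less by (intro wt_sum_eq_egf_coeff) auto
    ultimately show ?thesis
      by (simp add: wt_seq_def)
  qed
qed

lemma wt_seq_Suc: "wt_seq (Suc n) = fact n * prod_list (map (egf \<circ> block_wt_seq) boundary_wts) $ n"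
proof -
  have "wt_sum {1..Suc n} = fact (card {1..Suc n} - 1)
      * prod_list (map (egf \<circ> block_wt_seq) boundary_wts) $ (card {1..Suc n} - 1)"
    by (rule wt_sum_eq_egf_coeff) (auto intro: wt_sum_eq_wt_seq_card)
  then show ?thesis
    by (simp add: wt_seq_def)
qed

lemma stirling_egf_eq: "stirling_egf k q t u = Abs_fps (\<lambda>n. wt_seq n / fact n)"
  by (simp add: stirling_egf_def stirling_perms_eq_stirling_words wt_seq_def wt_sum_def)

lemma wt_seq_0: "wt_seq 0 = 1"
  by (simp add: wt_seq_def wt_sum_def stirling_words_empty asc_def des_def plat_def)

lemma egf_block_wt_seq: "egf (block_wt_seq c) = stirling_egf k q t u - 1 + fps_const c"
  by (rule fps_ext) (simp add: stirling_egf_eq egf_def block_wt_seq_def wt_seq_0)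

lemma fps_deriv_stirling_egf:
  "fps_deriv (stirling_egf k q t u) = prod_list (map (egf \<circ> block_wt_seq) boundary_wts)"
proof (rule fps_ext)
  fix n
  have "fps_deriv (stirling_egf k q t u) $ n = of_nat (Suc n) * wt_seq (Suc n) / fact (Suc n)"
    by (simp add: stirling_egf_eq)
  also have "\<dots> = wt_seq (Suc n) / fact n"
    by (simp add: field_simps del: of_nat_Suc)
  finally show "fps_deriv (stirling_egf k q t u) $ n = prod_list (map (egf \<circ> block_wt_seq) boundary_wts) $ n"
    by (simp add: wt_seq_Suc)
qed

end

theorem theorem4p7:
  fixes k :: nat and q t u :: "'a::field_char_0"
  assumes "k \<ge> 1"
  shows "fps_deriv (stirling_egf k q t u) =
           (stirling_egf k q t u - 1 + fps_const q) * (stirling_egf k q t u - 1 + fps_const t)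
           * (stirling_egf k q t u - 1 + fps_const u) ^ (k - 1)
         \<and> fps_nth (stirling_egf k q t u) 0 = 1"
proof -
  interpret stirling_weights k q t u
    using assms by unfold_locales simp
  have "fps_nth (stirling_egf k q t u) 0 = 1"
    by (simp add: stirling_egf_eq wt_seq_0)
  then show ?thesis
    unfolding fps_deriv_stirling_egf boundary_wts_def
    by (simp add: egf_block_wt_seq ac_simps)
qed

end
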